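(* Let $A\in M_n$ and $c\in\mathbb{R}^n$. If $\alpha$ is a sharp point of $W_c(A)$, then $\alpha$ is a $c$-value of $A$.
   Context: $M_n$ denotes the space of $n\times n$ complex matrices. The $c$-numerical range of $A\in M_n$ is $W_c(A)=\{\sum_{j=1}^n c_jx_j^*Ax_j:\ x_1,\dots,x_n\in\mathbb{C}^n\text{ orthonormal}\}$, a compact convex set. A sharp point of $W_c(A)$ is a point $\alpha\in\partial W_c(A)$ through which pass at least two distinct supporting lines of $W_c(A)$. Let $\lambda_1(A),\dots,\lambda_n(A)$ be the eigenvalues of $A$ with algebraic multiplicity and $i_1<\dots<i_r$ the indices with $c_{i_s}\neq0$. A $c$-value of $A$ is a number $\sum_{s=1}^r c_{i_s}\lambda_{j_s}(A)$ with $j_1,\dots,j_r\in\{1,\dots,n\}$ pairwise distinct. *)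

theory Defs
  imports "HOL-Analysis.Elementary_Topology" "Jordan_Normal_Form.Char_Poly"
begin

text \<open>Vectors of C^n are represented as functions nat => complex (entries with index < n);
  a family x_1..x_n of vectors is a function nat => nat => complex (x j i = i-th entry of x_j).\<close>

definition quad_form :: "nat \<Rightarrow> complex mat \<Rightarrow> (nat \<Rightarrow> complex) \<Rightarrow> complex" where
  "quad_form n A x = (\<Sum>i<n. \<Sum>k<n. cnj (x i) * A $$ (i, k) * x k)"

definition orthonormal_family :: "nat \<Rightarrow> (nat \<Rightarrow> nat \<Rightarrow> complex) \<Rightarrow> bool" where
  "orthonormal_family n x \<longleftrightarrow>
     (\<forall>j<n. \<forall>l<n. (\<Sum>i<n. cnj (x j i) * x l i) = (if j = l then 1 else 0))"

definition c_numerical_range :: "nat \<Rightarrow> (nat \<Rightarrow> real) \<Rightarrow> complex mat \<Rightarrow> complex set" where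
  "c_numerical_range n c A =
     {\<Sum>j<n. complex_of_real (c j) * quad_form n A (x j) | x. orthonormal_family n x}"

definition supporting_line_at :: "complex set \<Rightarrow> complex \<Rightarrow> complex set \<Rightarrow> bool" where
  "supporting_line_at S \<alpha> L \<longleftrightarrow> \<alpha> \<in> L \<and>
     (\<exists>u t. u \<noteq> 0 \<and> L = {z. Re (cnj u * z) = t} \<and> (\<forall>z\<in>S. Re (cnj u * z) \<le> t))"

definition sharp_point :: "complex set \<Rightarrow> complex \<Rightarrow> bool" where
  "sharp_point S \<alpha> \<longleftrightarrow> \<alpha> \<in> frontier S \<and>
     (\<exists>L1 L2. L1 \<noteq> L2 \<and> supporting_line_at S \<alpha> L1 \<and> supporting_line_at S \<alpha> L2)"

text \<open>Eigenvalues with algebraic multiplicity: a list ls of length n with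
  char_poly A = prod (X - lambda). c-value: sum over indices i with c i nonzero of
  c i * ls ! (sigma i), sigma injective into the indices < n.\<close>
definition c_value :: "nat \<Rightarrow> (nat \<Rightarrow> real) \<Rightarrow> complex mat \<Rightarrow> complex \<Rightarrow> bool" where
  "c_value n c A \<alpha> \<longleftrightarrow> (\<exists>ls \<sigma>. length ls = n \<and> char_poly A = (\<Prod>a\<leftarrow>ls. [:- a, 1:]) \<and>
     inj_on \<sigma> {i. i < n \<and> c i \<noteq> 0} \<and> \<sigma> ` {i. i < n \<and> c i \<noteq> 0} \<subseteq> {..<n} \<and>
     \<alpha> = (\<Sum>i\<in>{i. i < n \<and> c i \<noteq> 0}. complex_of_real (c i) * ls ! \<sigma> i))"

end

theory Submission
  imports Defs "Jordan_Normal_Form.Schur_Decomposition"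
begin

text \<open>Since \<open>W\<^sub>c(A)\<close> is compact, the sharp point \<open>\<alpha>\<close> is attained by an orthonormal family \<open>x\<close>,
  and \<open>x\<close> maximises \<open>Re (cnj u * z)\<close> over \<open>W\<^sub>c(A)\<close> for the normals \<open>u\<^sub>1\<close>, \<open>u\<^sub>2\<close> of two
  non-parallel supporting lines. Rotating \<open>x\<^sub>j\<close>, \<open>x\<^sub>k\<close> within their span by a small angle \<open>t\<close>
  moves the point by \<open>t (c\<^sub>j - c\<^sub>k) (w x\<^sub>j\<^sup>*Ax\<^sub>k + cnj w x\<^sub>k\<^sup>*Ax\<^sub>j) + O(t\<^sup>2)\<close>, so maximality in
  two independent directions, for \<open>w = 1\<close> and \<open>w = \<i>\<close>, forces \<open>x\<^sub>j\<^sup>*Ax\<^sub>k = 0\<close> whenever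
  \<open>c\<^sub>j \<noteq> c\<^sub>k\<close>. Hence the compression \<open>X\<^sup>*AX\<close>, which is unitarily similar to \<open>A\<close>, is block
  diagonal along the level sets of \<open>c\<close>. On each block \<open>c\<close> is constant and the trace is the sum
  of the block's eigenvalues, so \<open>\<alpha> = \<Sum>\<^sub>j c\<^sub>j (X\<^sup>*AX)\<^sub>j\<^sub>j\<close> is a \<open>c\<close>-value.\<close>

definition cinner :: "nat \<Rightarrow> (nat \<Rightarrow> complex) \<Rightarrow> (nat \<Rightarrow> complex) \<Rightarrow> complex" where
  "cinner n v w = (\<Sum>i<n. cnj (v i) * w i)"

definition lincomb :: "complex \<Rightarrow> complex \<Rightarrow> (nat \<Rightarrow> complex) \<Rightarrow> (nat \<Rightarrow> complex) \<Rightarrow> nat \<Rightarrow> complex" where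
  "lincomb p q v w = (\<lambda>i. p * v i + q * w i)"

definition sesq_form :: "nat \<Rightarrow> complex mat \<Rightarrow> (nat \<Rightarrow> complex) \<Rightarrow> (nat \<Rightarrow> complex) \<Rightarrow> complex" where
  "sesq_form n A v w = (\<Sum>i<n. \<Sum>k<n. cnj (v i) * A $$ (i, k) * w k)"

definition c_form :: "nat \<Rightarrow> (nat \<Rightarrow> real) \<Rightarrow> complex mat \<Rightarrow> (nat \<Rightarrow> nat \<Rightarrow> complex) \<Rightarrow> complex" where
  "c_form n c A x = (\<Sum>j<n. complex_of_real (c j) * quad_form n A (x j))"

lemma cinner_lincomb_left: "cinner n (lincomb p q v w) z = cnj p * cinner n v z + cnj q * cinner n w z"
  by (simp add: lincomb_def cinner_def sum_distrib_left sum.distrib algebra_simps)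

lemma cinner_lincomb_right: "cinner n z (lincomb p q v w) = p * cinner n z v + q * cinner n z w"
  by (simp add: lincomb_def cinner_def sum_distrib_left sum.distrib algebra_simps)

lemma sesq_form_lincomb_left:
  "sesq_form n A (lincomb p q v w) z = cnj p * sesq_form n A v z + cnj q * sesq_form n A w z"
  by (simp add: lincomb_def sesq_form_def sum_distrib_left sum.distrib algebra_simps)

lemma sesq_form_lincomb_right:
  "sesq_form n A z (lincomb p q v w) = p * sesq_form n A z v + q * sesq_form n A z w"
  by (simp add: lincomb_def sesq_form_def sum_distrib_left sum.distrib algebra_simps)

lemma quad_form_eq_sesq_form: "quad_form n A v = sesq_form n A v v"
  by (simp add: quad_form_def sesq_form_def)

lemma orthonormal_family_iff_cinner:
  "orthonormal_family n x \<longleftrightarrow> (\<forall>j<n. \<forall>l<n. cinner n (x j) (x l) = (if j = l then 1 else 0))"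
  by (simp add: orthonormal_family_def cinner_def)

lemma c_form_mem_c_numerical_range:
  "orthonormal_family n x \<Longrightarrow> c_form n c A x \<in> c_numerical_range n c A"
  unfolding c_numerical_range_def c_form_def by blast

subsection \<open>Givens rotations of an orthonormal family\<close>

definition givens_rotation ::
  "(nat \<Rightarrow> nat \<Rightarrow> complex) \<Rightarrow> nat \<Rightarrow> nat \<Rightarrow> real \<Rightarrow> real \<Rightarrow> complex \<Rightarrow> nat \<Rightarrow> nat \<Rightarrow> complex" where
  "givens_rotation x j k a s w = (\<lambda>l.
     if l = j then lincomb (complex_of_real a) (complex_of_real s * w) (x j) (x k)
     else if l = k then lincomb (- complex_of_real s * cnj w) (complex_of_real a) (x j) (x k)
     else x l)"

lemma orthonormal_family_givens_rotation:
  assumes x: "orthonormal_family n x" and jk: "j < n" "k < n" "j \<noteq> k"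
    and as: "a\<^sup>2 + s\<^sup>2 = 1" and w: "cnj w * w = 1"
  shows "orthonormal_family n (givens_rotation x j k a s w)"
proof -
  have X: "\<And>p q. p < n \<Longrightarrow> q < n \<Longrightarrow> cinner n (x p) (x q) = (if p = q then 1 else 0)"
    using x by (simp add: orthonormal_family_iff_cinner)
  have w': "w * cnj w = 1" using w by (simp add: mult.commute)
  have w2: "\<And>z. w * (cnj w * z) = z" using w' by (metis mult.assoc mult_1)
  have as': "complex_of_real a * complex_of_real a + complex_of_real s * complex_of_real s = 1"
    using as by (metis of_real_add of_real_mult of_real_1 power2_eq_square)
  show ?thesis unfolding orthonormal_family_iff_cinner
  proof (intro allI impI)
    fix p q assume p: "p < n" and q: "q < n"
    show "cinner n (givens_rotation x j k a s w p) (givens_rotation x j k a s w q) = (if p = q then 1 else 0)"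
      using jk p q X[OF p q]
      by (simp add: givens_rotation_def cinner_lincomb_left cinner_lincomb_right)
        (auto simp: X algebra_simps w w' w2 as')
  qed
qed

lemma c_form_givens_rotation:
  assumes jk: "j < n" "k < n" "j \<noteq> k"
    and as: "a\<^sup>2 + s\<^sup>2 = 1" and w: "cnj w * w = 1"
  shows "c_form n c A (givens_rotation x j k a s w) = c_form n c A x
    + complex_of_real (c j - c k) *
      (complex_of_real (s\<^sup>2) * (sesq_form n A (x k) (x k) - sesq_form n A (x j) (x j))
       + complex_of_real (a * s) * (w * sesq_form n A (x j) (x k) + cnj w * sesq_form n A (x k) (x j)))"
proof -
  let ?y = "givens_rotation x j k a s w" and ?ar = "complex_of_real a" and ?sr = "complex_of_real s"
  let ?d = "\<lambda>l. complex_of_real (c l) * (quad_form n A (?y l) - quad_form n A (x l))"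
  have w': "w * cnj w = 1" using w by (simp add: mult.commute)
  have as': "?ar * ?ar = 1 - ?sr * ?sr"
    using as by (metis add_diff_cancel_right' of_real_add of_real_mult of_real_1 power2_eq_square)
  have "c_form n c A ?y - c_form n c A x = (\<Sum>l<n. ?d l)"
    by (simp add: c_form_def sum_subtractf algebra_simps)
  also have "\<dots> = (\<Sum>l\<in>{j, k}. ?d l)"
    using jk by (intro sum.mono_neutral_right) (auto simp: givens_rotation_def)
  also have "\<dots> = ?d j + ?d k"
    using jk by simp
  also have "\<dots> = complex_of_real (c j - c k) *
      (complex_of_real (s\<^sup>2) * (sesq_form n A (x k) (x k) - sesq_form n A (x j) (x j))
       + complex_of_real (a * s) * (w * sesq_form n A (x j) (x k) + cnj w * sesq_form n A (x k) (x j)))"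
  proof -
    have yj: "quad_form n A (?y j) = ?ar * ?ar * sesq_form n A (x j) (x j)
       + ?ar * ?sr * (w * sesq_form n A (x j) (x k) + cnj w * sesq_form n A (x k) (x j))
       + ?sr * ?sr * (w * cnj w) * sesq_form n A (x k) (x k)"
      using jk by (simp add: givens_rotation_def quad_form_eq_sesq_form sesq_form_lincomb_left
          sesq_form_lincomb_right distrib_left distrib_right right_diff_distrib left_diff_distrib)
    have yk: "quad_form n A (?y k) = ?ar * ?ar * sesq_form n A (x k) (x k)
       - ?ar * ?sr * (w * sesq_form n A (x j) (x k) + cnj w * sesq_form n A (x k) (x j))
       + ?sr * ?sr * (w * cnj w) * sesq_form n A (x j) (x j)"
      using jk by (simp add: givens_rotation_def quad_form_eq_sesq_form sesq_form_lincomb_left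
          sesq_form_lincomb_right distrib_left distrib_right right_diff_distrib left_diff_distrib)
    show ?thesis
      unfolding yj yk w' as' by (simp add: quad_form_eq_sesq_form algebra_simps power2_eq_square)
  qed
  finally show ?thesis by (simp add: algebra_simps)
qed

text \<open>For \<open>P \<noteq> 0\<close> the point \<open>(a, s) = (\<bar>Q\<bar> + 1, P) / r\<close> of the unit circle makes the linear
  term \<open>a s P\<close> dominate.\<close>

lemma circle_form_nonpos_imp_zero:
  fixes P Q :: real
  assumes nonpos: "\<And>a s. a\<^sup>2 + s\<^sup>2 = 1 \<Longrightarrow> s\<^sup>2 * Q + a * s * P \<le> 0"
  shows "P = 0"
proof (rule ccontr)
  assume "P \<noteq> 0"
  define r where "r = sqrt (P\<^sup>2 + (\<bar>Q\<bar> + 1)\<^sup>2)"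
  have r2: "r\<^sup>2 = P\<^sup>2 + (\<bar>Q\<bar> + 1)\<^sup>2"
    unfolding r_def by (simp add: add_nonneg_nonneg)
  have "r > 0"
    unfolding r_def using \<open>P \<noteq> 0\<close> by (simp add: add_pos_nonneg)
  define a s where "a = (\<bar>Q\<bar> + 1) / r" and "s = P / r"
  have "a\<^sup>2 + s\<^sup>2 = (P\<^sup>2 + (\<bar>Q\<bar> + 1)\<^sup>2) / r\<^sup>2"
    using \<open>r > 0\<close> by (simp add: a_def s_def field_simps)
  then have "a\<^sup>2 + s\<^sup>2 = 1"
    using \<open>r > 0\<close> r2 abs_ge_zero[of Q] by simp
  moreover have "s\<^sup>2 * Q + a * s * P = P\<^sup>2 * (Q + \<bar>Q\<bar> + 1) / r\<^sup>2"
    using \<open>r > 0\<close> by (simp add: a_def s_def power2_eq_square field_simps)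
  moreover have "P\<^sup>2 * (Q + \<bar>Q\<bar> + 1) / r\<^sup>2 > 0"
    using \<open>P \<noteq> 0\<close> \<open>r > 0\<close> by (intro divide_pos_pos mult_pos_pos) auto
  ultimately show False
    using nonpos by fastforce
qed

lemma complex_eq_0_if_Re_cnj_mult_eq_0:
  assumes "Im (cnj u1 * u2) \<noteq> 0" "Re (cnj u1 * d) = 0" "Re (cnj u2 * d) = 0"
  shows "d = 0"
proof -
  have a: "Re u1 * Re d + Im u1 * Im d = 0" "Re u2 * Re d + Im u2 * Im d = 0"
    using assms(2,3) by simp_all
  have det: "Re u1 * Im u2 - Im u1 * Re u2 \<noteq> 0"
    using assms(1) by simp
  have "(Re u1 * Im u2 - Im u1 * Re u2) * Re d
      = Im u2 * (Re u1 * Re d + Im u1 * Im d) - Im u1 * (Re u2 * Re d + Im u2 * Im d)"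
    by (simp add: algebra_simps)
  then have "Re d = 0"
    using a det by simp
  have "(Re u1 * Im u2 - Im u1 * Re u2) * Im d
      = Re u1 * (Re u2 * Re d + Im u2 * Im d) - Re u2 * (Re u1 * Re d + Im u1 * Im d)"
    by (simp add: algebra_simps)
  then have "Im d = 0"
    using a det by simp
  with \<open>Re d = 0\<close> show ?thesis
    by (simp add: complex_eq_iff)
qed

definition Re_maximizer ::
  "nat \<Rightarrow> (nat \<Rightarrow> real) \<Rightarrow> complex mat \<Rightarrow> complex \<Rightarrow> (nat \<Rightarrow> nat \<Rightarrow> complex) \<Rightarrow> bool" where
  "Re_maximizer n c A u x \<longleftrightarrow> orthonormal_family n x \<and>
     (\<forall>y. orthonormal_family n y \<longrightarrow> Re (cnj u * c_form n c A y) \<le> Re (cnj u * c_form n c A x))"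

lemma Re_maximizer_stationary:
  assumes max: "Re_maximizer n c A u x" and jk: "j < n" "k < n" "j \<noteq> k" and w: "cnj w * w = 1"
  shows "Re (cnj u * (complex_of_real (c j - c k) *
    (w * sesq_form n A (x j) (x k) + cnj w * sesq_form n A (x k) (x j)))) = 0"
  (is "Re (cnj u * ?E) = 0")
proof (rule circle_form_nonpos_imp_zero)
  fix a s :: real
  assume as: "a\<^sup>2 + s\<^sup>2 = 1"
  define V where "V = complex_of_real (c j - c k) * (sesq_form n A (x k) (x k) - sesq_form n A (x j) (x j))"
  have x: "orthonormal_family n x"
    using max by (simp add: Re_maximizer_def)
  have "Re (cnj u * c_form n c A (givens_rotation x j k a s w)) \<le> Re (cnj u * c_form n c A x)"
    using max orthonormal_family_givens_rotation[OF x jk as w] by (simp add: Re_maximizer_def)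
  also have "c_form n c A (givens_rotation x j k a s w)
      = c_form n c A x + complex_of_real (s\<^sup>2) * V + complex_of_real (a * s) * ?E"
    unfolding c_form_givens_rotation[OF jk as w] V_def by (simp add: algebra_simps)
  finally show "s\<^sup>2 * Re (cnj u * V) + a * s * Re (cnj u * ?E) \<le> 0"
    by (simp add: algebra_simps)
qed

lemma Re_maximizers_sesq_form_eq_0:
  assumes max1: "Re_maximizer n c A u1 x" and max2: "Re_maximizer n c A u2 x"
    and u: "Im (cnj u1 * u2) \<noteq> 0" and jk: "j < n" "k < n" and cjk: "c j \<noteq> c k"
  shows "sesq_form n A (x j) (x k) = 0"
proof -
  let ?b = "sesq_form n A (x j) (x k)" and ?b' = "sesq_form n A (x k) (x j)"
  have "j \<noteq> k"
    using cjk by auto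
  have stat: "complex_of_real (c j - c k) * (w * ?b + cnj w * ?b') = 0" if "cnj w * w = 1" for w
    using complex_eq_0_if_Re_cnj_mult_eq_0[OF u
        Re_maximizer_stationary[OF max1 jk \<open>j \<noteq> k\<close> that]
        Re_maximizer_stationary[OF max2 jk \<open>j \<noteq> k\<close> that]] .
  have sum: "?b + ?b' = 0"
    using stat[of 1] cjk by simp
  have "complex_of_real (c j - c k) * \<i> * (?b - ?b') = 0"
    using stat[of \<i>] by (simp add: algebra_simps)
  then have diff: "?b - ?b' = 0"
    using cjk by simp
  have "?b = ((?b + ?b') + (?b - ?b')) / 2"
    by simp
  then show ?thesis
    using sum diff by simp
qed

subsection \<open>Sharp points and compactness\<close>

lemma eq_of_real_mult_if_Im_cnj_mult_eq_0:
  assumes "u \<noteq> 0" "Im (cnj u * v) = 0"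
  shows "v = complex_of_real (Re (cnj u * v) / (cmod u)\<^sup>2) * u"
proof -
  have "cnj u * v = complex_of_real (Re (cnj u * v))"
    using assms(2) by (simp add: complex_eq_iff)
  moreover have "cnj u * u = complex_of_real ((cmod u)\<^sup>2)"
    by (subst complex_norm_square) (simp add: mult.commute)
  moreover have "u * (cnj u * v) = (cnj u * u) * v"
    by (simp add: algebra_simps)
  moreover have "cmod u \<noteq> 0"
    using assms(1) by simp
  ultimately show ?thesis
    by (simp add: field_simps)
qed

lemma sharp_point_two_directions:
  assumes "sharp_point S \<alpha>"
  obtains u1 u2 where "Im (cnj u1 * u2) \<noteq> 0"
    and "\<forall>z\<in>S. Re (cnj u1 * z) \<le> Re (cnj u1 * \<alpha>)" and "\<forall>z\<in>S. Re (cnj u2 * z) \<le> Re (cnj u2 * \<alpha>)"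
proof -
  obtain L1 L2 where "L1 \<noteq> L2" and s1: "supporting_line_at S \<alpha> L1" and s2: "supporting_line_at S \<alpha> L2"
    using assms unfolding sharp_point_def by blast
  obtain u1 t1 where u1: "u1 \<noteq> 0" "L1 = {z. Re (cnj u1 * z) = t1}" "\<forall>z\<in>S. Re (cnj u1 * z) \<le> t1" "\<alpha> \<in> L1"
    using s1 unfolding supporting_line_at_def by blast
  obtain u2 t2 where u2: "u2 \<noteq> 0" "L2 = {z. Re (cnj u2 * z) = t2}" "\<forall>z\<in>S. Re (cnj u2 * z) \<le> t2" "\<alpha> \<in> L2"
    using s2 unfolding supporting_line_at_def by blast
  have "Im (cnj u1 * u2) \<noteq> 0"
  proof
    assume "Im (cnj u1 * u2) = 0"
    then obtain r :: real where r: "u2 = complex_of_real r * u1"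
      using eq_of_real_mult_if_Im_cnj_mult_eq_0[OF u1(1)] by blast
    then have "r \<noteq> 0"
      using u2(1) by auto
    have Re_u2: "Re (cnj u2 * z) = r * Re (cnj u1 * z)" for z
      unfolding r by (simp add: algebra_simps)
    then have "t2 = r * t1"
      using u1(2,4) u2(2,4) by auto
    then have "L1 = L2"
      unfolding u1(2) u2(2) Re_u2 using \<open>r \<noteq> 0\<close> by auto
    with \<open>L1 \<noteq> L2\<close> show False ..
  qed
  with u1 u2 that show ?thesis
    by auto
qed

lemma convergent_subsequence_real:
  fixes f :: "nat \<Rightarrow> real"
  assumes "\<And>k. \<bar>f k\<bar> \<le> B"
  shows "\<exists>r l. strict_mono r \<and> (f \<circ> r) \<longlonglongrightarrow> l"
proof -
  obtain r where r: "strict_mono r" "monoseq (\<lambda>n. f (r n))"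
    using seq_monosub[of f] by blast
  have "Bseq (\<lambda>n. f (r n))"
    using assms by (intro BseqI'[of _ B]) simp
  then have "convergent (\<lambda>n. f (r n))"
    using r(2) Bseq_monoseq_convergent by blast
  then show ?thesis
    using r(1) unfolding convergent_def comp_def by blast
qed

lemma convergent_subsequence_complex:
  fixes f :: "nat \<Rightarrow> complex"
  assumes B: "\<And>k. cmod (f k) \<le> B"
  shows "\<exists>r l. strict_mono r \<and> (f \<circ> r) \<longlonglongrightarrow> l"
proof -
  have "\<bar>Re (f k)\<bar> \<le> B" "\<bar>Im (f k)\<bar> \<le> B" for k
    using B[of k] abs_Re_le_cmod[of "f k"] abs_Im_le_cmod[of "f k"] by linarith+
  then obtain r1 l1 where r1: "strict_mono r1" "((\<lambda>k. Re (f k)) \<circ> r1) \<longlonglongrightarrow> l1"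
    using convergent_subsequence_real[of "\<lambda>k. Re (f k)" B] by blast
  obtain r2 l2 where r2: "strict_mono r2" "((\<lambda>k. Im (f (r1 k))) \<circ> r2) \<longlonglongrightarrow> l2"
    using convergent_subsequence_real[of "\<lambda>k. Im (f (r1 k))" B] \<open>\<And>k. \<bar>Im (f k)\<bar> \<le> B\<close> by blast
  have "(\<lambda>k. Re (f (r1 (r2 k)))) \<longlonglongrightarrow> l1"
    using LIMSEQ_subseq_LIMSEQ[OF r1(2) r2(1)] by (simp add: comp_def)
  moreover have "(\<lambda>k. Im (f (r1 (r2 k)))) \<longlonglongrightarrow> l2"
    using r2(2) by (simp add: comp_def)
  ultimately have "(\<lambda>k. Complex (Re (f (r1 (r2 k)))) (Im (f (r1 (r2 k))))) \<longlonglongrightarrow> Complex l1 l2"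
    by (rule tendsto_Complex)
  then have "(f \<circ> (r1 \<circ> r2)) \<longlonglongrightarrow> Complex l1 l2"
    by (simp add: comp_def)
  then show ?thesis
    using strict_mono_o[OF r1(1) r2(1)] by blast
qed

lemma convergent_subsequence_finite_family:
  fixes X :: "nat \<Rightarrow> 'i \<Rightarrow> complex"
  assumes "finite F" and "\<And>k i. i \<in> F \<Longrightarrow> cmod (X k i) \<le> B"
  shows "\<exists>r L. strict_mono r \<and> (\<forall>i\<in>F. (\<lambda>k. X (r k) i) \<longlonglongrightarrow> L i)"
  using assms
proof (induction F rule: finite_induct)
  case empty
  show ?case
    using strict_mono_id by blast
next
  case (insert a F)
  then obtain r L where r: "strict_mono r" "\<forall>i\<in>F. (\<lambda>k. X (r k) i) \<longlonglongrightarrow> L i"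
    by blast
  obtain r' l where r': "strict_mono r'" "((\<lambda>k. X (r k) a) \<circ> r') \<longlonglongrightarrow> l"
    using convergent_subsequence_complex[of "\<lambda>k. X (r k) a" B] insert.prems by blast
  have "(\<lambda>k. X ((r \<circ> r') k) i) \<longlonglongrightarrow> (L(a := l)) i" if "i \<in> insert a F" for i
  proof (cases "i = a")
    case True
    then show ?thesis
      using r'(2) by (simp add: comp_def)
  next
    case False
    then have "((\<lambda>k. X (r k) i) \<circ> r') \<longlonglongrightarrow> L i"
      using that r(2) r'(1) LIMSEQ_subseq_LIMSEQ by auto
    then show ?thesis
      using False by (simp add: comp_def)
  qed
  then show ?case
    using strict_mono_o[OF r(1) r'(1)] by blast
qed

lemma orthonormal_family_entry_bound:
  assumes x: "orthonormal_family n x" and "j < n" "i < n"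
  shows "cmod (x j i) \<le> 1"
proof -
  have "(\<Sum>i<n. cnj (x j i) * x j i) = 1"
    using assms unfolding orthonormal_family_def by auto
  moreover have "cnj (x j i) * x j i = complex_of_real ((cmod (x j i))\<^sup>2)" for i
    by (subst complex_norm_square) (simp add: mult.commute)
  ultimately have "complex_of_real (\<Sum>i<n. (cmod (x j i))\<^sup>2) = 1"
    by simp
  then have "(\<Sum>i<n. (cmod (x j i))\<^sup>2) = 1"
    using of_real_eq_1_iff by blast
  moreover have "(cmod (x j i))\<^sup>2 \<le> (\<Sum>i<n. (cmod (x j i))\<^sup>2)"
    using assms by (intro member_le_sum) auto
  ultimately show ?thesis
    by (simp add: power_le_one_iff)
qed

lemma closed_c_numerical_range: "closed (c_numerical_range n c A)"
  unfolding closed_sequential_limits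
proof (intro allI impI, elim conjE)
  fix z \<alpha>
  assume z: "\<forall>k. z k \<in> c_numerical_range n c A" and lim: "z \<longlonglongrightarrow> \<alpha>"
  then have "\<forall>k. \<exists>x. orthonormal_family n x \<and> z k = c_form n c A x"
    unfolding c_numerical_range_def c_form_def by blast
  then obtain xs where xs: "\<And>k. orthonormal_family n (xs k)" "\<And>k. z k = c_form n c A (xs k)"
    by metis
  have "\<exists>r L. strict_mono r \<and> (\<forall>p\<in>{..<n} \<times> {..<n}. (\<lambda>k. xs (r k) (fst p) (snd p)) \<longlonglongrightarrow> L p)"
    using orthonormal_family_entry_bound[OF xs(1)]
    by (intro convergent_subsequence_finite_family[where B = 1]) auto
  then obtain r L where r: "strict_mono r"
    and L: "\<forall>p\<in>{..<n} \<times> {..<n}. (\<lambda>k. xs (r k) (fst p) (snd p)) \<longlonglongrightarrow> L p"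
    by blast
  define y where "y j i = L (j, i)" for j i
  have conv: "(\<lambda>k. xs (r k) j i) \<longlonglongrightarrow> y j i" if "j < n" "i < n" for j i
    using L that unfolding y_def by auto
  have orth: "orthonormal_family n y"
    unfolding orthonormal_family_def
  proof (intro allI impI)
    fix j l assume "j < n" "l < n"
    then have "(\<lambda>k. \<Sum>i<n. cnj (xs (r k) j i) * xs (r k) l i) \<longlonglongrightarrow> (\<Sum>i<n. cnj (y j i) * y l i)"
      by (intro tendsto_sum tendsto_mult tendsto_cnj conv) auto
    moreover have "(\<lambda>k. \<Sum>i<n. cnj (xs (r k) j i) * xs (r k) l i) = (\<lambda>k. if j = l then 1 else 0)"
      using xs(1) \<open>j < n\<close> \<open>l < n\<close> unfolding orthonormal_family_def by auto
    ultimately have "(\<lambda>k. if j = l then 1 else 0) \<longlonglongrightarrow> (\<Sum>i<n. cnj (y j i) * y l i)"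
      by simp
    then show "(\<Sum>i<n. cnj (y j i) * y l i) = (if j = l then 1 else 0)"
      using LIMSEQ_unique tendsto_const by blast
  qed
  have "(\<lambda>k. c_form n c A (xs (r k))) \<longlonglongrightarrow> c_form n c A y"
    unfolding c_form_def quad_form_def
    by (intro tendsto_sum tendsto_mult tendsto_cnj tendsto_const conv) auto
  moreover have "(\<lambda>k. c_form n c A (xs (r k))) \<longlonglongrightarrow> \<alpha>"
    using LIMSEQ_subseq_LIMSEQ[OF lim r] by (simp add: comp_def xs(2))
  ultimately have "\<alpha> = c_form n c A y"
    using LIMSEQ_unique by blast
  then show "\<alpha> \<in> c_numerical_range n c A"
    using c_form_mem_c_numerical_range[OF orth] by simp
qed

subsection \<open>The compression of \<open>A\<close> to an orthonormal basis\<close>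

definition compression :: "nat \<Rightarrow> complex mat \<Rightarrow> (nat \<Rightarrow> nat \<Rightarrow> complex) \<Rightarrow> complex mat" where
  "compression n A x = mat n n (\<lambda>(j, k). sesq_form n A (x j) (x k))"

lemma c_form_eq_compression_diag:
  "c_form n c A x = (\<Sum>j<n. complex_of_real (c j) * compression n A x $$ (j, j))"
  by (simp add: c_form_def compression_def quad_form_eq_sesq_form)

lemma char_poly_compression:
  assumes A: "A \<in> carrier_mat n n" and x: "orthonormal_family n x"
  shows "char_poly (compression n A x) = char_poly A"
proof -
  define X where "X = mat n n (\<lambda>(i, j). x j i)"
  define XH where "XH = mat n n (\<lambda>(j, i). cnj (x j i))"
  have X: "X \<in> carrier_mat n n" and XH: "XH \<in> carrier_mat n n"
    unfolding X_def XH_def by auto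
  have HX: "XH * X = 1\<^sub>m n"
  proof (rule eq_matI)
    fix j l assume "j < dim_row (1\<^sub>m n :: complex mat)" "l < dim_col (1\<^sub>m n :: complex mat)"
    then show "(XH * X) $$ (j, l) = 1\<^sub>m n $$ (j, l)"
      using x unfolding X_def XH_def orthonormal_family_def
      by (simp add: scalar_prod_def atLeast0LessThan)
  qed (auto simp: X_def XH_def)
  have "compression n A x = XH * A * X"
  proof (rule eq_matI)
    fix j k assume "j < dim_row (XH * A * X)" "k < dim_col (XH * A * X)"
    then have "j < n" "k < n"
      using XH X by auto
    then have "(XH * A * X) $$ (j, k) = (\<Sum>l<n. (\<Sum>i<n. cnj (x j i) * A $$ (i, l)) * x k l)"
      using A unfolding X_def XH_def by (simp add: scalar_prod_def atLeast0LessThan)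
    also have "\<dots> = sesq_form n A (x j) (x k)"
      unfolding sesq_form_def sum_distrib_right by (rule sum.swap)
    finally show "compression n A x $$ (j, k) = (XH * A * X) $$ (j, k)"
      using \<open>j < n\<close> \<open>k < n\<close> by (simp add: compression_def)
  qed (use A X XH in \<open>auto simp: compression_def\<close>)
  moreover have "similar_mat (XH * A * X) A"
    using A X XH HX mat_mult_left_right_inverse[OF XH X HX]
    by (intro similar_matI[of _ A XH X n]) auto
  ultimately show ?thesis
    using char_poly_similar by metis
qed

lemma trace_mult_comm:
  fixes M N :: "'a::comm_semiring_1 mat"
  assumes "M \<in> carrier_mat n n" "N \<in> carrier_mat n n"
  shows "(\<Sum>i<n. (M * N) $$ (i, i)) = (\<Sum>i<n. (N * M) $$ (i, i))"
proof -
  have "(\<Sum>i<n. (M * N) $$ (i, i)) = (\<Sum>i<n. \<Sum>l<n. M $$ (i, l) * N $$ (l, i))"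
    using assms by (simp add: scalar_prod_def atLeast0LessThan)
  also have "\<dots> = (\<Sum>l<n. \<Sum>i<n. N $$ (l, i) * M $$ (i, l))"
    by (subst sum.swap) (simp add: mult.commute)
  also have "\<dots> = (\<Sum>i<n. (N * M) $$ (i, i))"
    using assms by (simp add: scalar_prod_def atLeast0LessThan)
  finally show ?thesis .
qed

lemma trace_similar_mat_wit:
  fixes B T :: "'a::comm_ring_1 mat"
  assumes "B \<in> carrier_mat n n" "similar_mat_wit B T P Q"
  shows "(\<Sum>i<n. B $$ (i, i)) = (\<Sum>i<n. T $$ (i, i))"
proof -
  from similar_mat_witD2[OF assms]
  have T: "T \<in> carrier_mat n n" and P: "P \<in> carrier_mat n n" and Q: "Q \<in> carrier_mat n n"
    and QP: "Q * P = 1\<^sub>m n" and B: "B = P * T * Q"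
    by auto
  have "(\<Sum>i<n. (P * T * Q) $$ (i, i)) = (\<Sum>i<n. (Q * (P * T)) $$ (i, i))"
    using P T Q by (intro trace_mult_comm) auto
  also have "Q * (P * T) = T"
    using P T Q QP by (simp add: assoc_mult_mat[symmetric])
  finally show ?thesis
    unfolding B .
qed

lemma trace_eq_sum_eigenvalues:
  fixes B :: "complex mat"
  assumes B: "B \<in> carrier_mat n n"
  obtains es where "length es = n" "char_poly B = (\<Prod>a\<leftarrow>es. [:- a, 1:])"
    "(\<Sum>i<n. B $$ (i, i)) = sum_list es"
proof -
  obtain es where es: "char_poly B = (\<Prod>a\<leftarrow>es. [:- a, 1:])" "length es = n"
    using char_poly_factorized[OF B] by blast
  obtain T P Q where "schur_decomposition B es = (T, P, Q)"
    by (metis prod_cases3)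
  from schur_decomposition[OF B es(1) this]
  have sim: "similar_mat_wit B T P Q" and "diag_mat T = es"
    by auto
  have "(\<Sum>i<n. B $$ (i, i)) = (\<Sum>i<n. T $$ (i, i))"
    by (rule trace_similar_mat_wit[OF B sim])
  also have "\<dots> = sum_list es"
    using similar_mat_witD2[OF B sim] \<open>diag_mat T = es\<close>
    by (auto simp: diag_mat_def sum_list_sum_nth atLeast0LessThan)
  finally show ?thesis
    using es that by blast
qed

subsection \<open>Block diagonal matrices\<close>

definition permute_mat :: "nat \<Rightarrow> (nat \<Rightarrow> nat) \<Rightarrow> 'a mat \<Rightarrow> 'a mat" where
  "permute_mat n \<pi> B = mat n n (\<lambda>(i, j). B $$ (\<pi> i, \<pi> j))"

lemma sum_delta_mult:
  fixes f :: "nat \<Rightarrow> 'a::semiring_1"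
  assumes "a < n"
  shows "(\<Sum>r\<in>{0..<n}. (if r = a then 1 else 0) * f r) = f a"
proof -
  have "(\<Sum>r\<in>{0..<n}. (if r = a then 1 else 0) * f r) = (\<Sum>r\<in>{0..<n}. if r = a then f r else 0)"
    by (intro sum.cong) auto
  then show ?thesis
    using assms by simp
qed

lemma char_poly_permute_mat:
  fixes B :: "'a::field mat"
  assumes B: "B \<in> carrier_mat n n" and \<pi>: "bij_betw \<pi> {..<n} {..<n}"
  shows "char_poly (permute_mat n \<pi> B) = char_poly B"
proof -
  have \<pi>_lt: "\<pi> i < n" if "i < n" for i
    using \<pi> that by (auto simp: bij_betw_def)
  have \<pi>_eq: "\<pi> i = \<pi> k \<longleftrightarrow> i = k" if "i < n" "k < n" for i k
    using \<pi> that by (auto simp: bij_betw_def inj_on_def)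
  define P :: "'a mat" where "P = mat n n (\<lambda>(i, j). if i = \<pi> j then 1 else 0)"
  define PT :: "'a mat" where "PT = mat n n (\<lambda>(i, j). if j = \<pi> i then 1 else 0)"
  have P: "P \<in> carrier_mat n n" and PT: "PT \<in> carrier_mat n n"
    unfolding P_def PT_def by auto
  have PTP: "PT * P = 1\<^sub>m n"
    by (rule eq_matI) (use \<pi>_lt \<pi>_eq in \<open>auto simp: P_def PT_def scalar_prod_def sum_delta_mult\<close>)
  have PTB: "(PT * B) $$ (i, l) = B $$ (\<pi> i, l)" if "i < n" "l < n" for i l
    using that B \<pi>_lt by (simp add: PT_def scalar_prod_def sum_delta_mult)
  have "permute_mat n \<pi> B = PT * B * P"
  proof (rule eq_matI)
    fix i k assume "i < dim_row (PT * B * P)" "k < dim_col (PT * B * P)"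
    then have ik: "i < n" "k < n"
      using PT P by auto
    then have "(PT * B * P) $$ (i, k) = (\<Sum>l\<in>{0..<n}. (if l = \<pi> k then 1 else 0) * B $$ (\<pi> i, l))"
      using B PT PTB by (auto simp: P_def scalar_prod_def mult.commute intro: sum.cong)
    also have "\<dots> = B $$ (\<pi> i, \<pi> k)"
      using \<pi>_lt ik by (simp add: sum_delta_mult)
    finally show "permute_mat n \<pi> B $$ (i, k) = (PT * B * P) $$ (i, k)"
      using ik by (simp add: permute_mat_def)
  qed (use PT P B in \<open>auto simp: permute_mat_def\<close>)
  moreover have "similar_mat (PT * B * P) B"
    using PT P B PTP mat_mult_left_right_inverse[OF PT P PTP]
    by (intro similar_matI[of _ B PT P n]) auto
  ultimately show ?thesis
    using char_poly_similar by metis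
qed

lemma bij_betw_lessThan_prefix:
  assumes I: "I \<subseteq> {..<n}"
  obtains \<pi> where "bij_betw \<pi> {..<n} {..<n}" "\<And>k. k < n \<Longrightarrow> k < card I \<longleftrightarrow> \<pi> k \<in> I"
proof -
  define m where "m = card I"
  define J where "J = {..<n} - I"
  have fI: "finite I"
    using I finite_subset by blast
  have "m \<le> n"
    unfolding m_def using card_mono[OF _ I] by simp
  obtain f where f: "bij_betw f {0..<m} I"
    using ex_bij_betw_nat_finite[OF fI] unfolding m_def by blast
  have "card J = n - m"
    unfolding J_def m_def using I fI by (simp add: card_Diff_subset)
  then obtain g where g: "bij_betw g {0..<n-m} J"
    using ex_bij_betw_nat_finite[of J] unfolding J_def by auto
  define \<pi> where "\<pi> k = (if k < m then f k else g (k - m))" for k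
  have b1: "bij_betw \<pi> {0..<m} I"
    using f by (rule bij_betw_cong[THEN iffD1, rotated]) (auto simp: \<pi>_def)
  have "bij_betw (\<lambda>k. k - m) {m..<n} {0..<n-m}"
    by (rule bij_betw_byWitness[where f'="\<lambda>k. k + m"]) auto
  then have "bij_betw (g \<circ> (\<lambda>k. k - m)) {m..<n} J"
    using g by (rule bij_betw_trans)
  then have b2: "bij_betw \<pi> {m..<n} J"
    by (rule bij_betw_cong[THEN iffD1, rotated]) (auto simp: \<pi>_def)
  have "bij_betw \<pi> ({0..<m} \<union> {m..<n}) (I \<union> J)"
    by (rule bij_betw_combine[OF b1 b2]) (auto simp: J_def)
  moreover have "{0..<m} \<union> {m..<n} = {..<n}" "I \<union> J = {..<n}"
    using \<open>m \<le> n\<close> I by (auto simp: J_def)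
  ultimately have "bij_betw \<pi> {..<n} {..<n}"
    by simp
  moreover have "\<pi> k \<in> I" if "k < m" for k
    using b1 that by (auto simp: bij_betw_def)
  moreover have "\<pi> k \<notin> I" if "m \<le> k" "k < n" for k
    using b2 that by (auto simp: bij_betw_def J_def)
  ultimately show ?thesis
    using that unfolding m_def by (meson not_le)
qed

lemma bij_betw_shift_extend:
  fixes \<sigma> :: "nat \<Rightarrow> nat"
  assumes "bij_betw \<sigma> {..<d} {..<d}"
  shows "bij_betw (\<lambda>k. if k < m then k else m + \<sigma> (k - m)) {..<m + d} {..<m + d}"
proof -
  let ?\<rho> = "\<lambda>k. if k < m then k else m + \<sigma> (k - m)"
  have "bij_betw ?\<rho> {0..<m} {0..<m}"
    by (rule bij_betw_cong[THEN iffD1, rotated, OF bij_betw_id]) auto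
  moreover have "bij_betw ((\<lambda>k. m + k) \<circ> (\<sigma> \<circ> (\<lambda>k. k - m))) {m..<m + d} {m..<m + d}"
  proof (intro bij_betw_trans)
    show "bij_betw (\<lambda>k. k - m) {m..<m + d} {..<d}"
      by (rule bij_betw_byWitness[where f'="\<lambda>k. k + m"]) auto
    show "bij_betw (\<lambda>k. m + k) {..<d} {m..<m + d}"
      by (rule bij_betw_byWitness[where f'="\<lambda>k. k - m"]) auto
  qed fact
  then have "bij_betw ?\<rho> {m..<m + d} {m..<m + d}"
    by (rule bij_betw_cong[THEN iffD1, rotated]) auto
  ultimately have "bij_betw ?\<rho> ({0..<m} \<union> {m..<m + d}) ({0..<m} \<union> {m..<m + d})"
    by (rule bij_betw_combine) auto
  moreover have "{0..<m} \<union> {m..<m + d} = {..<m + d}"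
    by auto
  ultimately show ?thesis
    by simp
qed

lemma sum_lessThan_add_split:
  fixes f :: "nat \<Rightarrow> 'a::comm_monoid_add"
  shows "(\<Sum>k<m + d. f k) = (\<Sum>k<m. f k) + (\<Sum>k<d. f (m + k))"
  by (induction d) (simp_all add: add.assoc)

lemma permute_mat_four_block:
  assumes B: "B \<in> carrier_mat (m + d) (m + d)" and \<pi>: "\<And>k. k < m + d \<Longrightarrow> \<pi> k < m + d"
    and zero: "\<And>i j. i < m + d \<Longrightarrow> j < m + d \<Longrightarrow> (i < m) \<noteq> (j < m) \<Longrightarrow> B $$ (\<pi> i, \<pi> j) = 0"
  shows "permute_mat (m + d) \<pi> B = four_block_mat
    (mat m m (\<lambda>(i, j). B $$ (\<pi> i, \<pi> j))) (0\<^sub>m m d) (0\<^sub>m d m)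
    (mat d d (\<lambda>(i, j). B $$ (\<pi> (m + i), \<pi> (m + j))))"
  by (rule eq_matI) (use zero in \<open>auto simp: permute_mat_def\<close>)

definition weighted_diag_spectral :: "nat \<Rightarrow> (nat \<Rightarrow> real) \<Rightarrow> complex mat \<Rightarrow> bool" where
  "weighted_diag_spectral n c B \<longleftrightarrow> (\<exists>ls \<sigma>. length ls = n \<and> char_poly B = (\<Prod>a\<leftarrow>ls. [:- a, 1:]) \<and>
     bij_betw \<sigma> {..<n} {..<n} \<and>
     (\<Sum>j<n. complex_of_real (c j) * B $$ (j, j)) = (\<Sum>j<n. complex_of_real (c j) * ls ! \<sigma> j))"

lemma weighted_diag_spectral_permute_mat:
  fixes B :: "complex mat"
  assumes B: "B \<in> carrier_mat n n" and \<pi>: "bij_betw \<pi> {..<n} {..<n}"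
    and "weighted_diag_spectral n (c \<circ> \<pi>) (permute_mat n \<pi> B)"
  shows "weighted_diag_spectral n c B"
proof -
  obtain ls \<sigma> where ls: "length ls = n" "char_poly (permute_mat n \<pi> B) = (\<Prod>a\<leftarrow>ls. [:- a, 1:])"
    and \<sigma>: "bij_betw \<sigma> {..<n} {..<n}"
    and sums: "(\<Sum>k<n. complex_of_real (c (\<pi> k)) * permute_mat n \<pi> B $$ (k, k))
      = (\<Sum>k<n. complex_of_real (c (\<pi> k)) * ls ! \<sigma> k)"
    using assms(3) unfolding weighted_diag_spectral_def by auto
  define \<sigma>' where "\<sigma>' = \<sigma> \<circ> inv_into {..<n} \<pi>"
  have \<sigma>': "bij_betw \<sigma>' {..<n} {..<n}"
    unfolding \<sigma>'_def by (rule bij_betw_trans[OF bij_betw_inv_into[OF \<pi>] \<sigma>])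
  have \<sigma>'\<pi>: "\<sigma>' (\<pi> k) = \<sigma> k" if "k < n" for k
    using that \<pi> by (simp add: \<sigma>'_def bij_betw_def inv_into_f_f)
  have "(\<Sum>j<n. complex_of_real (c j) * B $$ (j, j))
      = (\<Sum>k<n. complex_of_real (c (\<pi> k)) * B $$ (\<pi> k, \<pi> k))"
    using sum.reindex_bij_betw[OF \<pi>, of "\<lambda>j. complex_of_real (c j) * B $$ (j, j)"] by simp
  also have "\<dots> = (\<Sum>k<n. complex_of_real (c (\<pi> k)) * ls ! \<sigma> k)"
    unfolding sums[symmetric] by (intro sum.cong) (auto simp: permute_mat_def)
  also have "\<dots> = (\<Sum>j<n. complex_of_real (c j) * ls ! \<sigma>' j)"
    using sum.reindex_bij_betw[OF \<pi>, of "\<lambda>j. complex_of_real (c j) * ls ! \<sigma>' j"] \<sigma>'\<pi> by simp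
  finally show ?thesis
    using ls \<sigma>' char_poly_permute_mat[OF B \<pi>] unfolding weighted_diag_spectral_def by auto
qed

lemma weighted_diag_spectral_four_block:
  fixes B1 B4 :: "complex mat"
  assumes B1: "B1 \<in> carrier_mat m m" and B4: "B4 \<in> carrier_mat d d"
    and c: "\<And>k. k < m \<Longrightarrow> c k = \<gamma>" and "weighted_diag_spectral d (\<lambda>k. c (m + k)) B4"
  shows "weighted_diag_spectral (m + d) c (four_block_mat B1 (0\<^sub>m m d) (0\<^sub>m d m) B4)"
proof -
  let ?B = "four_block_mat B1 (0\<^sub>m m d) (0\<^sub>m d m) B4"
  obtain ls4 \<sigma>4 where "length ls4 = d" and cp4: "char_poly B4 = (\<Prod>a\<leftarrow>ls4. [:- a, 1:])"
    and \<sigma>4: "bij_betw \<sigma>4 {..<d} {..<d}"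
    and sum4: "(\<Sum>k<d. complex_of_real (c (m + k)) * B4 $$ (k, k))
      = (\<Sum>k<d. complex_of_real (c (m + k)) * ls4 ! \<sigma>4 k)"
    using assms(4) unfolding weighted_diag_spectral_def by blast
  obtain es1 where "length es1 = m" and cp1: "char_poly B1 = (\<Prod>a\<leftarrow>es1. [:- a, 1:])"
    and tr1: "(\<Sum>k<m. B1 $$ (k, k)) = sum_list es1"
    using trace_eq_sum_eigenvalues[OF B1] by blast
  define \<rho> where "\<rho> k = (if k < m then k else m + \<sigma>4 (k - m))" for k
  have "char_poly ?B = char_poly B1 * char_poly B4"
    by (rule char_poly_0_block[OF refl]) (use char_poly_factorized B1 B4 in auto)
  moreover have "(\<Sum>k<m + d. complex_of_real (c k) * ?B $$ (k, k))
      = complex_of_real \<gamma> * sum_list es1 + (\<Sum>k<d. complex_of_real (c (m + k)) * B4 $$ (k, k))"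
    unfolding sum_lessThan_add_split tr1[symmetric] sum_distrib_left
    using B1 B4 c by (auto intro!: sum.cong)
  moreover have "\<dots> = (\<Sum>k<m + d. complex_of_real (c k) * (es1 @ ls4) ! \<rho> k)"
    unfolding sum_lessThan_add_split sum4 sum_list_sum_nth
    using c \<open>length es1 = m\<close>
    by (simp add: \<rho>_def nth_append sum_distrib_left atLeast0LessThan)
  moreover have "bij_betw \<rho> {..<m + d} {..<m + d}"
    unfolding \<rho>_def using \<sigma>4 by (rule bij_betw_shift_extend)
  ultimately show ?thesis
    using \<open>length es1 = m\<close> \<open>length ls4 = d\<close> cp1 cp4
    unfolding weighted_diag_spectral_def by (intro exI[of _ "es1 @ ls4"] exI[of _ \<rho>]) auto
qed

text \<open>The induction splits off the level set of \<open>c 0\<close>: moved to the front, it makes \<open>B\<close> a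
  block diagonal matrix with two blocks, the first of which contributes only its trace.\<close>

lemma weighted_diag_spectral_if_block_diagonal:
  fixes B :: "complex mat" and c :: "nat \<Rightarrow> real"
  assumes "B \<in> carrier_mat n n" "\<And>j k. j < n \<Longrightarrow> k < n \<Longrightarrow> c j \<noteq> c k \<Longrightarrow> B $$ (j, k) = 0"
  shows "weighted_diag_spectral n c B"
  using assms
proof (induction n arbitrary: B c rule: less_induct)
  case (less n)
  note B = less.prems(1) and zero = less.prems(2)
  show ?case
  proof (cases "n = 0")
    case True
    then show ?thesis
      using char_poly_factorized[OF B] bij_betw_id unfolding weighted_diag_spectral_def by fastforce
  next
    case False
    define I where "I = {j. j < n \<and> c j = c 0}"
    define m where "m = card I"
    have "I \<subseteq> {..<n}" "0 \<in> I"
      using False by (auto simp: I_def)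
    moreover have "finite I"
      using \<open>I \<subseteq> {..<n}\<close> finite_subset by blast
    ultimately have "0 < m" "m \<le> n"
      using card_mono[OF _ \<open>I \<subseteq> {..<n}\<close>] unfolding m_def by (auto simp: card_gt_0_iff)
    then obtain d where n: "n = m + d" and "d < n"
      using le_Suc_ex by fastforce
    obtain \<pi> where \<pi>: "bij_betw \<pi> {..<n} {..<n}" and \<pi>_I: "\<And>k. k < n \<Longrightarrow> k < m \<longleftrightarrow> \<pi> k \<in> I"
      using bij_betw_lessThan_prefix[OF \<open>I \<subseteq> {..<n}\<close>] unfolding m_def by blast
    have \<pi>_lt: "\<pi> k < n" if "k < n" for k
      using \<pi> that by (auto simp: bij_betw_def)
    have c_front: "c (\<pi> k) = c 0" if "k < m" for k
      using \<pi>_I[of k] that n by (auto simp: I_def)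
    have c_back: "c (\<pi> k) \<noteq> c 0" if "m \<le> k" "k < n" for k
      using \<pi>_I[of k] \<pi>_lt[of k] that by (auto simp: I_def)
    have off_block: "B $$ (\<pi> i, \<pi> j) = 0" if "i < n" "j < n" "(i < m) \<noteq> (j < m)" for i j
    proof -
      have "c (\<pi> i) \<noteq> c (\<pi> j)"
        using c_front c_back that by (metis not_le)
      then show ?thesis
        using zero \<pi>_lt that by blast
    qed
    define B1 where "B1 = mat m m (\<lambda>(i, j). B $$ (\<pi> i, \<pi> j))"
    define B4 where "B4 = mat d d (\<lambda>(i, j). B $$ (\<pi> (m + i), \<pi> (m + j)))"
    have B1: "B1 \<in> carrier_mat m m" and B4: "B4 \<in> carrier_mat d d"
      unfolding B1_def B4_def by auto
    have "weighted_diag_spectral d (\<lambda>k. (c \<circ> \<pi>) (m + k)) B4"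
      by (rule less.IH[OF \<open>d < n\<close> B4]) (use zero \<pi>_lt n in \<open>auto simp: B4_def\<close>)
    then have "weighted_diag_spectral n (c \<circ> \<pi>) (four_block_mat B1 (0\<^sub>m m d) (0\<^sub>m d m) B4)"
      unfolding n using c_front by (intro weighted_diag_spectral_four_block[OF B1 B4]) auto
    moreover have "permute_mat n \<pi> B = four_block_mat B1 (0\<^sub>m m d) (0\<^sub>m d m) B4"
      unfolding n B1_def B4_def
      by (rule permute_mat_four_block) (use B \<pi>_lt off_block n in auto)
    ultimately show ?thesis
      using weighted_diag_spectral_permute_mat[OF B \<pi>] by simp
  qed
qed

theorem mainTheorem16:
  fixes A :: "complex mat" and n :: nat and c :: "nat \<Rightarrow> real" and \<alpha> :: complex
  assumes "A \<in> carrier_mat n n"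
    and "sharp_point (c_numerical_range n c A) \<alpha>"
  shows "c_value n c A \<alpha>"
proof -
  let ?W = "c_numerical_range n c A" and ?S = "{i. i < n \<and> c i \<noteq> 0}"
  have "\<alpha> \<in> ?W"
    using assms(2) closed_c_numerical_range unfolding sharp_point_def frontier_def by auto
  then obtain x where x: "orthonormal_family n x" and \<alpha>: "\<alpha> = c_form n c A x"
    unfolding c_numerical_range_def c_form_def by blast
  obtain u1 u2 where u: "Im (cnj u1 * u2) \<noteq> 0"
    and "\<forall>z\<in>?W. Re (cnj u1 * z) \<le> Re (cnj u1 * \<alpha>)" "\<forall>z\<in>?W. Re (cnj u2 * z) \<le> Re (cnj u2 * \<alpha>)"
    using sharp_point_two_directions[OF assms(2)] by blast
  then have "Re_maximizer n c A u1 x" "Re_maximizer n c A u2 x"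
    using x c_form_mem_c_numerical_range unfolding Re_maximizer_def \<alpha> by blast+
  then have "compression n A x $$ (j, k) = 0" if "j < n" "k < n" "c j \<noteq> c k" for j k
    using Re_maximizers_sesq_form_eq_0[OF _ _ u that] that by (simp add: compression_def)
  then have "weighted_diag_spectral n c (compression n A x)"
    by (intro weighted_diag_spectral_if_block_diagonal) (auto simp: compression_def)
  then obtain ls \<sigma> where "length ls = n" and cp: "char_poly (compression n A x) = (\<Prod>a\<leftarrow>ls. [:- a, 1:])"
    and \<sigma>: "bij_betw \<sigma> {..<n} {..<n}" and "\<alpha> = (\<Sum>j<n. complex_of_real (c j) * ls ! \<sigma> j)"
    unfolding weighted_diag_spectral_def \<alpha> c_form_eq_compression_diag by blast
  moreover have "char_poly A = (\<Prod>a\<leftarrow>ls. [:- a, 1:])"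
    using cp char_poly_compression[OF assms(1) x] by simp
  moreover have "(\<Sum>j<n. complex_of_real (c j) * ls ! \<sigma> j) = (\<Sum>i\<in>?S. complex_of_real (c i) * ls ! \<sigma> i)"
    by (rule sum.mono_neutral_right) auto
  moreover have "inj_on \<sigma> ?S" "\<sigma> ` ?S \<subseteq> {..<n}"
    using \<sigma> by (auto simp: bij_betw_def intro: inj_on_subset)
  ultimately show ?thesis
    unfolding c_value_def by blast
qed

end
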